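(* Let $n\ge 2$ and let $k$ be an odd integer with $1\le k\le n$. Then $$c(n,n-k)=a(n,k)+a(n,k-1).$$
   Context: $c(n,j)$ is the unsigned Stirling number of the first kind (number of permutations of $\{1,\dots,n\}$ with exactly $j$ cycles; $c(n,j)=0$ for $j\le 0$ when $n\ge 1$). $A_n$ is the alternating group on $\{1,\dots,n\}$, $T(A_n)=\{(1\,2)(i\,j)\mid 1\le i<j\le n\}$, $\ell_{T(A_n)}(v)=\min\{r\ge 0\mid v=t_1\cdots t_r,\ t_i\in T(A_n)\}$, and $a(n,m)$ is the number of $v\in A_n$ with $\ell_{T(A_n)}(v)=m$. *)

theory Defs
  imports "HOL-Combinatorics.Combinatorics"
begin

definition alt_group :: "nat \<Rightarrow> (nat \<Rightarrow> nat) set" where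
  "alt_group n = {v. v permutes {1..n} \<and> evenperm v}"

definition gens_T :: "nat \<Rightarrow> (nat \<Rightarrow> nat) set" where
  "gens_T n = {transpose 1 2 \<circ> transpose i j | i j. 1 \<le> i \<and> i < j \<and> j \<le> n}"

definition lenT :: "nat \<Rightarrow> (nat \<Rightarrow> nat) \<Rightarrow> nat" where
  "lenT n v = (LEAST r. \<exists>ts. length ts = r \<and> set ts \<subseteq> gens_T n \<and> v = foldr (\<circ>) ts id)"

definition a_count :: "nat \<Rightarrow> nat \<Rightarrow> nat" where
  "a_count n m = card {v \<in> alt_group n. lenT n v = m}"

end

theory Submission
  imports Defs
begin

text \<open>Write \<open>\<ell>(w)\<close> for the length of \<open>w \<in> S\<^sub>n\<close> as a product of arbitrary transpositions.
  Correcting a permutation \<open>w\<close> by \<open>(n w(n))\<close> so that it fixes \<open>n\<close> lowers \<open>\<ell>\<close> by one exactly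
  when \<open>w\<close> moves \<open>n\<close>; this is the Stirling recursion, so \<open>\<ell>\<close> takes the value \<open>m\<close> on
  \<open>c(n, n - m)\<close> permutations. A word of length \<open>r\<close> in the generators \<open>(1 2)(i j)\<close> is
  \<open>(1 2)\<^sup>r\<close> times a product of \<open>r\<close> transpositions, so for \<open>v \<in> A\<^sub>n\<close> the \<open>T\<close>-length is
  \<open>min (\<ell>(v)) (\<ell>((1 2) v))\<close>, where \<open>\<ell>(v)\<close> is even and the two lengths differ by one.
  Hence for odd \<open>k\<close> the \<open>T\<close>-length of \<open>v\<close> is \<open>k\<close> or \<open>k - 1\<close> exactly when
  \<open>\<ell>((1 2) v) = k\<close>, and \<open>v \<mapsto> (1 2) v\<close> maps these \<open>v\<close> bijectively onto the permutations
  of transposition length \<open>k\<close>.\<close>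

definition is_product :: "('a \<Rightarrow> 'a) set \<Rightarrow> nat \<Rightarrow> ('a \<Rightarrow> 'a) \<Rightarrow> bool" where
  "is_product G r w \<longleftrightarrow> (\<exists>gs. length gs = r \<and> set gs \<subseteq> G \<and> w = foldr (\<circ>) gs id)"

lemma is_product_0 [simp]: "is_product G 0 w \<longleftrightarrow> w = id"
  unfolding is_product_def by auto

lemma is_product_Suc:
  "is_product G (Suc r) w \<longleftrightarrow> (\<exists>g\<in>G. \<exists>u. is_product G r u \<and> w = g \<circ> u)"
proof
  assume "is_product G (Suc r) w"
  then obtain g gs where "length gs = r" "set (g # gs) \<subseteq> G" "w = foldr (\<circ>) (g # gs) id"
    unfolding is_product_def by (metis length_Suc_conv)
  then show "\<exists>g\<in>G. \<exists>u. is_product G r u \<and> w = g \<circ> u"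
    unfolding is_product_def by auto
next
  assume "\<exists>g\<in>G. \<exists>u. is_product G r u \<and> w = g \<circ> u"
  then obtain g gs where "g \<in> G" "length gs = r" "set gs \<subseteq> G" "w = g \<circ> foldr (\<circ>) gs id"
    unfolding is_product_def by blast
  then show "is_product G (Suc r) w"
    unfolding is_product_def by (intro exI[of _ "g # gs"]) auto
qed

lemma is_product_mono: "G \<subseteq> H \<Longrightarrow> is_product G r w \<Longrightarrow> is_product H r w"
  unfolding is_product_def by blast

definition transpositions :: "'a set \<Rightarrow> ('a \<Rightarrow> 'a) set" where
  "transpositions S = {transpose a b | a b. a \<in> S \<and> b \<in> S \<and> a \<noteq> b}"

lemma transpositions_mono: "S \<subseteq> T \<Longrightarrow> transpositions S \<subseteq> transpositions T"
  unfolding transpositions_def by blast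

lemma transpose_in_transpositions: "a \<in> S \<Longrightarrow> b \<in> S \<Longrightarrow> a \<noteq> b \<Longrightarrow> transpose a b \<in> transpositions S"
  unfolding transpositions_def by blast

lemma transpositions_involutive: "t \<in> transpositions S \<Longrightarrow> t \<circ> (t \<circ> w) = w"
  unfolding transpositions_def by (auto simp: comp_assoc[symmetric])

lemma transpositions_conj:
  assumes "p permutes S" "t \<in> transpositions S"
  shows "p \<circ> t \<circ> inv p \<in> transpositions S"
proof -
  obtain a b where t: "t = transpose a b" "a \<in> S" "b \<in> S" "a \<noteq> b"
    using assms(2) unfolding transpositions_def by blast
  have "p \<circ> t \<circ> inv p = transpose (p a) (p b)"
    using permutes_inverses[OF assms(1)] permutes_inj[OF assms(1)]
    by (auto simp: t(1) fun_eq_iff transpose_def inj_eq)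
  moreover have "p a \<noteq> p b" using t(4) permutes_inj[OF assms(1)] by (simp add: inj_eq)
  ultimately show ?thesis
    using t permutes_in_image[OF assms(1)] by (simp add: transpose_in_transpositions)
qed

lemma transposition_permutes: "t \<in> transpositions S \<Longrightarrow> t permutes S"
  unfolding transpositions_def by (auto intro: permutes_swap_id)

lemma is_product_transpositions_permutes:
  "is_product (transpositions S) r w \<Longrightarrow> w permutes S \<and> permutation w \<and> (evenperm w \<longleftrightarrow> even r)"
proof (induction r arbitrary: w)
  case (Suc r)
  then obtain t u where t: "t \<in> transpositions S" and u: "is_product (transpositions S) r u"
    and w: "w = t \<circ> u"
    by (auto simp: is_product_Suc)
  have "permutation t" "\<not> evenperm t"
    using t unfolding transpositions_def by (auto simp: permutation_swap_id evenperm_swap)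
  with Suc.IH[OF u] show ?case
    unfolding w
    by (metis permutes_compose transposition_permutes[OF t] permutation_compose evenperm_comp even_Suc)
qed simp

lemma permutes_is_product_transpositions:
  assumes "finite S" "w permutes S"
  shows "\<exists>r. is_product (transpositions S) r w"
  using assms(2,1)
proof (induction rule: permutes_induct)
  case id
  then show ?case by (metis is_product_0)
next
  case (swap a b p)
  then obtain r where "is_product (transpositions S) r p" by blast
  show ?case
  proof (cases "a = b")
    case False
    then have "is_product (transpositions S) (Suc r) (transpose a b \<circ> p)"
      using swap \<open>is_product (transpositions S) r p\<close>
      by (auto simp: is_product_Suc intro!: transpose_in_transpositions)
    then show ?thesis by blast
  qed (use \<open>is_product (transpositions S) r p\<close> in auto)
qed

definition transposition_length :: "'a set \<Rightarrow> ('a \<Rightarrow> 'a) \<Rightarrow> nat" where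
  "transposition_length S w = (LEAST r. is_product (transpositions S) r w)"

lemma transposition_length_le:
  "is_product (transpositions S) r w \<Longrightarrow> transposition_length S w \<le> r"
  unfolding transposition_length_def by (rule Least_le)

lemma is_product_transposition_length:
  "finite S \<Longrightarrow> w permutes S \<Longrightarrow> is_product (transpositions S) (transposition_length S w) w"
  unfolding transposition_length_def by (metis LeastI permutes_is_product_transpositions)

lemma transposition_length_id [simp]: "transposition_length S id = 0"
  using transposition_length_le[of S 0 id] by simp

lemma even_transposition_length:
  "finite S \<Longrightarrow> w permutes S \<Longrightarrow> even (transposition_length S w) \<longleftrightarrow> evenperm w"
  using is_product_transposition_length is_product_transpositions_permutes by blast

lemma permutes_comp_transposition:
  assumes "finite S" "w permutes S" "t \<in> transpositions S"
  shows "t \<circ> w permutes S" "evenperm (t \<circ> w) \<longleftrightarrow> \<not> evenperm w"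
proof -
  have tw: "is_product (transpositions S) (Suc (transposition_length S w)) (t \<circ> w)"
    using assms is_product_transposition_length by (auto simp: is_product_Suc)
  show "t \<circ> w permutes S" "evenperm (t \<circ> w) \<longleftrightarrow> \<not> evenperm w"
    using is_product_transpositions_permutes[OF tw] even_transposition_length[OF assms(1,2)]
    by auto
qed

lemma transposition_length_comp:
  assumes "finite S" "w permutes S" "t \<in> transpositions S"
  shows "transposition_length S (t \<circ> w) = Suc (transposition_length S w)
    \<or> transposition_length S w = Suc (transposition_length S (t \<circ> w))"
proof -
  let ?l = "transposition_length S w" and ?l' = "transposition_length S (t \<circ> w)"
  note tw = permutes_comp_transposition[OF assms]
  have "?l' \<le> Suc ?l"
    using assms is_product_transposition_length
    by (metis is_product_Suc transposition_length_le)
  moreover have "?l \<le> Suc ?l'"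
    using assms tw(1) is_product_transposition_length transpositions_involutive
    by (metis is_product_Suc transposition_length_le)
  moreover have "even ?l \<longleftrightarrow> odd ?l'"
    using assms tw by (simp add: even_transposition_length)
  moreover have "\<And>x y :: nat. x \<le> Suc y \<Longrightarrow> y \<le> Suc x \<Longrightarrow> (even x \<longleftrightarrow> odd y)
      \<Longrightarrow> y = Suc x \<or> x = Suc y"
    by presburger
  ultimately show ?thesis by blast
qed

definition fix_at :: "'a \<Rightarrow> ('a \<Rightarrow> 'a) \<Rightarrow> 'a \<Rightarrow> 'a" where
  "fix_at x w = transpose x (w x) \<circ> w"

lemma fix_at_permutes: "w permutes insert x S \<Longrightarrow> fix_at x w permutes S"
  unfolding fix_at_def by (rule permutes_insert_lemma)

lemma transpose_comp_fix_at: "transpose x (w x) \<circ> fix_at x w = w"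
  by (simp add: fix_at_def comp_assoc[symmetric])

lemma fix_at_comp_transposition:
  assumes "x \<notin> S" "w permutes insert x S" "t \<in> transpositions (insert x S)"
  shows "fix_at x (t \<circ> w) = fix_at x w
    \<or> (\<exists>t'\<in>transpositions S. fix_at x (t \<circ> w) = t' \<circ> fix_at x w \<and> ((t \<circ> w) x = x \<longleftrightarrow> w x = x))"
proof -
  define c where "c = w x"
  have c: "c \<in> insert x S"
    unfolding c_def using permutes_in_image[OF assms(2)] by simp
  obtain a b where t: "t = transpose a b" "a \<in> insert x S" "b \<in> insert x S" "a \<noteq> b"
    using assms(3) unfolding transpositions_def by blast
  show ?thesis
  proof (cases "a = x \<or> b = x")
    case False
    then have "t \<in> transpositions S"
      using t by (auto intro: transpose_in_transpositions)
    moreover have "fix_at x (t \<circ> w) = t \<circ> fix_at x w" "(t \<circ> w) x = x \<longleftrightarrow> w x = x"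
      using t False by (auto simp: fix_at_def fun_eq_iff transpose_def)
    ultimately show ?thesis by blast
  next
    case True
    then obtain e where e: "e \<in> S" "t = transpose e x"
      using t assms(1) by (auto simp: transpose_commute)
    consider "c = x \<or> c = e" | "c \<noteq> x" "c \<noteq> e" by blast
    then show ?thesis
    proof cases
      case 1
      then have "fix_at x (t \<circ> w) = fix_at x w"
        using e assms(1) by (auto simp: fix_at_def c_def[symmetric] fun_eq_iff transpose_def)
      then show ?thesis ..
    next
      case 2
      \<comment> \<open>\<open>(x c) (e x) = (e c) (x c)\<close>: the factor \<open>t = (e x)\<close> reappears as \<open>(e c)\<close>\<close>
      then have "transpose e c \<in> transpositions S"
        using c e by (auto intro: transpose_in_transpositions)
      moreover have "fix_at x (t \<circ> w) = transpose e c \<circ> fix_at x w" "(t \<circ> w) x \<noteq> x"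
        using 2 e assms(1) by (auto simp: fix_at_def c_def[symmetric] fun_eq_iff transpose_def)
      ultimately show ?thesis using 2 c_def by blast
    qed
  qed
qed

lemma is_product_fix_at:
  assumes "x \<notin> S" "is_product (transpositions (insert x S)) r w"
  shows "\<exists>r'. is_product (transpositions S) r' (fix_at x w) \<and> r' + of_bool (w x \<noteq> x) \<le> r"
  using assms(2)
proof (induction r arbitrary: w)
  case 0
  then show ?case by (auto simp: fix_at_def)
next
  case (Suc r)
  then obtain t u where t: "t \<in> transpositions (insert x S)"
    and u: "is_product (transpositions (insert x S)) r u" and w: "w = t \<circ> u"
    by (auto simp: is_product_Suc)
  obtain r' where r': "is_product (transpositions S) r' (fix_at x u)" "r' + of_bool (u x \<noteq> x) \<le> r"
    using Suc.IH[OF u] by blast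
  have "u permutes insert x S"
    using u is_product_transpositions_permutes by blast
  from fix_at_comp_transposition[OF assms(1) this t] show ?case
  proof
    assume "fix_at x (t \<circ> u) = fix_at x u"
    moreover have "r' + of_bool (w x \<noteq> x) \<le> Suc r"
      using r'(2) by (cases "w x = x") auto
    ultimately show ?thesis
      using r'(1) unfolding w by metis
  next
    assume "\<exists>t'\<in>transpositions S. fix_at x (t \<circ> u) = t' \<circ> fix_at x u \<and> ((t \<circ> u) x = x \<longleftrightarrow> u x = x)"
    then obtain t' where "t' \<in> transpositions S" "fix_at x w = t' \<circ> fix_at x u"
      "of_bool (w x \<noteq> x) = (of_bool (u x \<noteq> x) :: nat)"
      unfolding w by auto
    then show ?thesis
      using r' by (intro exI[of _ "Suc r'"] conjI) (metis is_product_Suc, simp)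
  qed
qed

lemma transposition_length_insert:
  assumes "finite S" "x \<notin> S" "p permutes S" "b \<in> insert x S"
  shows "transposition_length (insert x S) (transpose x b \<circ> p)
    = transposition_length S p + of_bool (b \<noteq> x)"
proof (rule antisym)
  let ?w = "transpose x b \<circ> p"
  have p_x: "p x = x" using permutes_not_in[OF assms(3,2)] .
  have w_perm: "?w permutes insert x S"
    using assms by (metis permutes_compose permutes_imp_permutes_insert insertI1 permutes_swap_id)
  obtain r' where "is_product (transpositions S) r' (fix_at x ?w)"
    "r' + of_bool (?w x \<noteq> x) \<le> transposition_length (insert x S) ?w"
    using is_product_fix_at[OF assms(2) is_product_transposition_length[OF _ w_perm]] assms(1) by auto
  moreover have "fix_at x ?w = p" "?w x = b"
    using p_x by (auto simp: fix_at_def comp_assoc[symmetric])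
  ultimately show "transposition_length S p + of_bool (b \<noteq> x) \<le> transposition_length (insert x S) ?w"
    using transposition_length_le by fastforce
  have p_prod: "is_product (transpositions (insert x S)) (transposition_length S p) p"
    using is_product_mono[OF transpositions_mono is_product_transposition_length[OF assms(1,3)]] by blast
  have "is_product (transpositions (insert x S)) (transposition_length S p + of_bool (b \<noteq> x)) ?w"
  proof (cases "b = x")
    case False
    then show ?thesis
      using p_prod assms(4) by (auto simp: is_product_Suc intro!: transpose_in_transpositions)
  qed (use p_prod in simp)
  then show "transposition_length (insert x S) ?w \<le> transposition_length S p + of_bool (b \<noteq> x)"
    by (rule transposition_length_le)
qed

lemma inj_on_transpose_comp_permutes:
  assumes "x \<notin> S"
  shows "inj_on (\<lambda>(b, p). transpose x b \<circ> p) (UNIV \<times> {p. p permutes S})"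
proof (rule inj_onI, clarify)
  fix b p c q
  assume "p permutes S" "q permutes S" and eq: "transpose x b \<circ> p = transpose x c \<circ> q"
  then have "p x = x" "q x = x" using assms permutes_not_in by metis+
  then have "b = c" using fun_cong[OF eq, of x] by simp
  then have "transpose x b \<circ> (transpose x b \<circ> p) = transpose x b \<circ> (transpose x b \<circ> q)"
    using eq by simp
  then show "b = c \<and> p = q"
    using \<open>b = c\<close> by (simp add: comp_assoc[symmetric])
qed

lemma permutes_insert_transposition_length_eq:
  assumes "finite S" "x \<notin> S"
  shows "{w. w permutes insert x S \<and> transposition_length (insert x S) w = m}
    = (\<lambda>(b, p). transpose x b \<circ> p) `
        (SIGMA b:insert x S. {p. p permutes S \<and> transposition_length S p + of_bool (b \<noteq> x) = m})"
    (is "?W = ?f ` (SIGMA b:insert x S. ?B b)")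
proof (intro set_eqI iffI)
  fix w assume w: "w \<in> ?W"
  define b p where "b = w x" and "p = fix_at x w"
  have bp: "b \<in> insert x S" "p permutes S" "w = transpose x b \<circ> p"
    using w permutes_in_image[of w "insert x S" x] fix_at_permutes[of w x S]
    unfolding b_def p_def by (simp_all add: transpose_comp_fix_at)
  then have "p \<in> ?B b"
    using w transposition_length_insert[OF assms bp(2,1)] by simp
  then show "w \<in> ?f ` (SIGMA b:insert x S. ?B b)"
    using bp(1,3) by (auto intro!: image_eqI[of _ _ "(b, p)"])
next
  fix w assume "w \<in> ?f ` (SIGMA b:insert x S. ?B b)"
  then obtain b p where bp: "b \<in> insert x S" "p \<in> ?B b" "w = transpose x b \<circ> p"
    by (elim imageE SigmaE) simp
  have "w permutes insert x S"
    using bp by (metis insertI1 permutes_compose permutes_imp_permutes_insert permutes_swap_id mem_Collect_eq)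
  moreover have "transposition_length (insert x S) w = m"
    using bp transposition_length_insert[OF assms] by simp
  ultimately show "w \<in> ?W"
    by blast
qed

lemma card_transposition_length_insert:
  assumes "finite S" "x \<notin> S"
  shows "card {w. w permutes insert x S \<and> transposition_length (insert x S) w = m}
    = card {p. p permutes S \<and> transposition_length S p = m}
      + card S * card {p. p permutes S \<and> Suc (transposition_length S p) = m}"
proof -
  define B where "B b = {p. p permutes S \<and> transposition_length S p + of_bool (b \<noteq> x) = m}" for b
  have "inj_on (\<lambda>(b, p). transpose x b \<circ> p) (SIGMA b:insert x S. B b)"
    by (rule inj_on_subset[OF inj_on_transpose_comp_permutes[OF assms(2)]]) (auto simp: B_def)
  moreover have "finite (B b)" for b
    unfolding B_def using finite_permutations[OF assms(1)] by simp
  ultimately have "card {w. w permutes insert x S \<and> transposition_length (insert x S) w = m}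
      = (\<Sum>b\<in>insert x S. card (B b))"
    using assms(1) unfolding permutes_insert_transposition_length_eq[OF assms] B_def
    by (simp add: card_image card_SigmaI)
  also have "\<dots> = card (B x) + (\<Sum>b\<in>S. card (B b))"
    using assms by simp
  also have "(\<Sum>b\<in>S. card (B b)) = (\<Sum>b\<in>S. card {p. p permutes S \<and> Suc (transposition_length S p) = m})"
  proof (rule sum.cong)
    show "card (B b) = card {p. p permutes S \<and> Suc (transposition_length S p) = m}" if "b \<in> S" for b
      using that assms(2) unfolding B_def by (metis (mono_tags) of_bool_eq(2) Suc_eq_plus1)
  qed simp
  finally show ?thesis by (simp add: B_def)
qed

theorem card_transposition_length:
  assumes "finite S"
  shows "card {w. w permutes S \<and> transposition_length S w = m}
    = (if m \<le> card S then stirling (card S) (card S - m) else 0)"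
  using assms
proof (induction S arbitrary: m rule: finite_induct)
  case empty
  have empty_perms: "{w. w permutes {} \<and> transposition_length {} w = m} = (if m = 0 then {id} else {})"
    by (auto simp: permutes_empty)
  show ?case unfolding empty_perms by simp
next
  case (insert x S)
  let ?N = "\<lambda>m. card {p. p permutes S \<and> transposition_length S p = m}"
  have "card {p. p permutes S \<and> Suc (transposition_length S p) = m} = (if m = 0 then 0 else ?N (m - 1))"
    by (cases m) auto
  with card_transposition_length_insert[OF insert.hyps]
  have rec: "card {w. w permutes insert x S \<and> transposition_length (insert x S) w = m}
      = ?N m + card S * (if m = 0 then 0 else ?N (m - 1))"
    by simp
  have card_insert: "card (insert x S) = Suc (card S)"
    using insert.hyps by simp
  show ?case
  proof (cases m)
    case 0
    then show ?thesis using rec insert.IH card_insert by simp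
  next
    case (Suc j)
    consider "j < card S" | "j = card S" | "card S < j" by linarith
    then show ?thesis
    proof cases
      case 1
      then have "card S - j = Suc (card S - Suc j)" by simp
      then show ?thesis using rec insert.IH card_insert Suc 1 by simp
    next
      case 2
      then show ?thesis using rec insert.IH card_insert Suc by (cases "card S") auto
    qed (use rec insert.IH card_insert Suc in simp)
  qed
qed

lemma transpositions_conj_transposition:
  assumes "\<sigma> \<in> transpositions S" "t \<in> transpositions S"
  shows "\<sigma> \<circ> t \<circ> \<sigma> \<in> transpositions S"
proof -
  obtain a b where "\<sigma> = transpose a b" "a \<in> S" "b \<in> S"
    using assms(1) unfolding transpositions_def by blast
  then show ?thesis
    using transpositions_conj[OF permutes_swap_id assms(2)] by simp
qed

lemma ex_transposition_comp_conj:
  assumes "\<sigma> \<in> transpositions S"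
  shows "(\<exists>t\<in>transpositions S. \<exists>u. Q (\<sigma> \<circ> u) \<and> v = \<sigma> \<circ> (t \<circ> u))
    \<longleftrightarrow> (\<exists>t\<in>transpositions S. \<exists>u. Q u \<and> v = t \<circ> u)"
proof -
  have \<sigma>\<sigma>: "\<sigma> \<circ> (\<sigma> \<circ> f) = f" for f
    using assms by (rule transpositions_involutive)
  \<comment> \<open>\<open>\<sigma> t u = (\<sigma> t \<sigma>) (\<sigma> u)\<close>, and conjugation by \<open>\<sigma>\<close> permutes the transpositions\<close>
  have conj: "\<sigma> \<circ> t \<circ> \<sigma> \<in> transpositions S" if "t \<in> transpositions S" for t
    using transpositions_conj_transposition[OF assms that] .
  show ?thesis
  proof
    assume "\<exists>t\<in>transpositions S. \<exists>u. Q (\<sigma> \<circ> u) \<and> v = \<sigma> \<circ> (t \<circ> u)"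
    then obtain t u where "t \<in> transpositions S" "Q (\<sigma> \<circ> u)" "v = \<sigma> \<circ> (t \<circ> u)"
      by blast
    then show "\<exists>t\<in>transpositions S. \<exists>u. Q u \<and> v = t \<circ> u"
      using conj by (intro bexI[of _ "\<sigma> \<circ> t \<circ> \<sigma>"] exI[of _ "\<sigma> \<circ> u"]) (auto simp: \<sigma>\<sigma> comp_assoc)
  next
    assume "\<exists>t\<in>transpositions S. \<exists>u. Q u \<and> v = t \<circ> u"
    then obtain t u where "t \<in> transpositions S" "Q u" "v = t \<circ> u"
      by blast
    then show "\<exists>t\<in>transpositions S. \<exists>u. Q (\<sigma> \<circ> u) \<and> v = \<sigma> \<circ> (t \<circ> u)"
      using conj by (intro bexI[of _ "\<sigma> \<circ> t \<circ> \<sigma>"] exI[of _ "\<sigma> \<circ> u"]) (auto simp: \<sigma>\<sigma> comp_assoc)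
  qed
qed

lemma is_product_shifted_transpositions:
  assumes "\<sigma> \<in> transpositions S"
  shows "is_product ((\<circ>) \<sigma> ` transpositions S) r v
    \<longleftrightarrow> is_product (transpositions S) r (if even r then v else \<sigma> \<circ> v)"
proof (induction r arbitrary: v)
  case (Suc r)
  have "is_product ((\<circ>) \<sigma> ` transpositions S) (Suc r) v
      \<longleftrightarrow> (\<exists>t\<in>transpositions S. \<exists>u. is_product (transpositions S) r (if even r then u else \<sigma> \<circ> u)
            \<and> v = \<sigma> \<circ> (t \<circ> u))"
    unfolding is_product_Suc Suc.IH by (simp add: comp_assoc)
  also have "\<dots> \<longleftrightarrow> is_product (transpositions S) (Suc r) (if even (Suc r) then v else \<sigma> \<circ> v)"
  proof (cases "even r")
    case True
    have eq: "v = \<sigma> \<circ> (t \<circ> u) \<longleftrightarrow> \<sigma> \<circ> v = t \<circ> u" for t u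
      using transpositions_involutive[OF assms] by metis
    show ?thesis using True by (simp add: is_product_Suc) (simp only: eq)
  next
    case False
    then show ?thesis
      using ex_transposition_comp_conj[OF assms, of "is_product (transpositions S) r" v]
      by (simp add: is_product_Suc)
  qed
  finally show ?case .
qed simp

lemma length_shifted_transpositions_eq_min:
  assumes "finite S" "\<sigma> \<in> transpositions S" "v permutes S" "evenperm v"
  shows "(LEAST r. is_product ((\<circ>) \<sigma> ` transpositions S) r v)
    = min (transposition_length S v) (transposition_length S (\<sigma> \<circ> v))"
proof (rule Least_equality)
  have \<sigma>v: "\<sigma> \<circ> v permutes S" "\<not> evenperm (\<sigma> \<circ> v)"
    using permutes_comp_transposition[OF assms(1,3,2)] assms(4) by simp_all
  show "is_product ((\<circ>) \<sigma> ` transpositions S) (min (transposition_length S v) (transposition_length S (\<sigma> \<circ> v))) v"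
  proof (cases "transposition_length S v \<le> transposition_length S (\<sigma> \<circ> v)")
    case True
    then show ?thesis
      using assms is_product_transposition_length[OF assms(1,3)] even_transposition_length[OF assms(1,3)]
      by (simp add: is_product_shifted_transpositions min_def)
  next
    case False
    then show ?thesis
      using assms is_product_transposition_length[OF assms(1) \<sigma>v(1)]
        even_transposition_length[OF assms(1) \<sigma>v(1)] \<sigma>v(2)
      by (simp add: is_product_shifted_transpositions min_def)
  qed
  show "min (transposition_length S v) (transposition_length S (\<sigma> \<circ> v)) \<le> r"
    if "is_product ((\<circ>) \<sigma> ` transpositions S) r v" for r
    using that transposition_length_le[of S r]
    by (cases "even r") (auto simp: is_product_shifted_transpositions[OF assms(2)] min_le_iff_disj)
qed

lemma card_evenperm_shifted_transposition_length:
  assumes "finite S" "\<sigma> \<in> transpositions S" "odd k"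
  shows "card {v. v permutes S \<and> evenperm v \<and> transposition_length S (\<sigma> \<circ> v) = k}
    = card {w. w permutes S \<and> transposition_length S w = k}"
proof -
  have \<sigma>\<sigma>: "\<sigma> \<circ> (\<sigma> \<circ> f) = f" for f
    using assms(2) by (rule transpositions_involutive)
  have inj: "inj_on ((\<circ>) \<sigma>) A" for A
    by (rule inj_onI) (metis \<sigma>\<sigma>)
  have "{v. v permutes S \<and> evenperm v \<and> transposition_length S (\<sigma> \<circ> v) = k}
      = (\<circ>) \<sigma> ` {w. w permutes S \<and> transposition_length S w = k}"
  proof (intro set_eqI iffI)
    fix v assume "v \<in> {v. v permutes S \<and> evenperm v \<and> transposition_length S (\<sigma> \<circ> v) = k}"
    then show "v \<in> (\<circ>) \<sigma> ` {w. w permutes S \<and> transposition_length S w = k}"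
      using permutes_comp_transposition[OF assms(1) _ assms(2)]
      by (intro image_eqI[of _ _ "\<sigma> \<circ> v"]) (auto simp: \<sigma>\<sigma>)
  next
    fix v assume "v \<in> (\<circ>) \<sigma> ` {w. w permutes S \<and> transposition_length S w = k}"
    then obtain w where w: "w permutes S" "transposition_length S w = k" "v = \<sigma> \<circ> w"
      by blast
    then have "\<not> evenperm w"
      using assms(1,3) even_transposition_length by blast
    moreover have "is_product (transpositions S) (Suc k) v"
      using is_product_transposition_length[OF assms(1) w(1)] w assms(2)
      by (auto simp: is_product_Suc)
    ultimately show "v \<in> {v. v permutes S \<and> evenperm v \<and> transposition_length S (\<sigma> \<circ> v) = k}"
      using is_product_transpositions_permutes assms(3) w by (auto simp: \<sigma>\<sigma>)
  qed
  then show ?thesis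
    using card_image[OF inj] by simp
qed

lemma gens_T_eq: "gens_T n = (\<circ>) (transpose 1 2) ` transpositions {1..n}"
proof (intro set_eqI iffI)
  fix g assume "g \<in> gens_T n"
  then show "g \<in> (\<circ>) (transpose 1 2) ` transpositions {1..n}"
    unfolding gens_T_def by (auto intro!: imageI transpose_in_transpositions)
next
  fix g assume "g \<in> (\<circ>) (transpose 1 2) ` transpositions {1..n}"
  then obtain a b where g: "g = transpose 1 2 \<circ> transpose a b" "a \<in> {1..n}" "b \<in> {1..n}" "a \<noteq> b"
    unfolding transpositions_def by blast
  show "g \<in> gens_T n"
  proof (cases "a < b")
    case True
    then show ?thesis using g unfolding gens_T_def by auto
  next
    case False
    then have "g = transpose 1 2 \<circ> transpose b a" "b < a"
      using g by (simp_all add: transpose_commute)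
    then show ?thesis using g unfolding gens_T_def by auto
  qed
qed

theorem claim7p1:
  fixes n k :: nat
  assumes "n \<ge> 2" and "odd k" and "1 \<le> k" and "k \<le> n"
  shows "stirling n (n - k) = a_count n k + a_count n (k - 1)"
proof -
  let ?S = "{1..n}" and ?\<sigma> = "transpose 1 2 :: nat \<Rightarrow> nat"
  have \<sigma>: "?\<sigma> \<in> transpositions ?S"
    using assms(1) by (simp add: transpose_in_transpositions)
  have "lenT n v = k \<or> lenT n v = k - 1 \<longleftrightarrow> transposition_length ?S (?\<sigma> \<circ> v) = k"
    if v: "v permutes ?S" "evenperm v" for v
  proof -
    have "lenT n v = min (transposition_length ?S v) (transposition_length ?S (?\<sigma> \<circ> v))"
      using length_shifted_transpositions_eq_min[OF finite_atLeastAtMost \<sigma> v]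
      unfolding lenT_def gens_T_eq[symmetric] is_product_def .
    moreover have "even (transposition_length ?S v)"
      using v even_transposition_length by blast
    moreover note transposition_length_comp[OF finite_atLeastAtMost v(1) \<sigma>]
    ultimately show ?thesis
      using assms(2) by presburger
  qed
  then have "{v \<in> alt_group n. lenT n v = k} \<union> {v \<in> alt_group n. lenT n v = k - 1}
      = {v. v permutes ?S \<and> evenperm v \<and> transposition_length ?S (?\<sigma> \<circ> v) = k}"
    unfolding alt_group_def by blast
  moreover have "finite (alt_group n)"
    unfolding alt_group_def using finite_permutations[of ?S] by simp
  ultimately have "a_count n k + a_count n (k - 1)
      = card {v. v permutes ?S \<and> evenperm v \<and> transposition_length ?S (?\<sigma> \<circ> v) = k}"
    unfolding a_count_def using assms(3) by (subst card_Un_disjoint[symmetric]) auto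
  also have "\<dots> = stirling n (n - k)"
    using card_evenperm_shifted_transposition_length[OF finite_atLeastAtMost \<sigma> assms(2)]
      card_transposition_length[of ?S k] assms(4) by simp
  finally show ?thesis ..
qed

end
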